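(* Let $k\geq 3$ be an integer, let $D$ be a digraph containing no subdivision of $B(k,1;1)$, let $\mathcal{C}$ be a nice collection of directed cycles of $D$ (with respect to $k$), and let $\mathcal{S}$ be a component of $\mathcal{C}$. Then the subdigraph of $D$ induced by $V(\bigcup\mathcal{S})$ has chromatic number at most $2k-2$.
   Context: Chromatic number of a digraph means that of its underlying undirected graph. For a positive integer $k$, a collection $\mathcal{C}$ of directed cycles of a digraph $D$ is nice if every cycle of $\mathcal{C}$ has length at least $2k-2$ and any two distinct cycles of $\mathcal{C}$ share at most one vertex. The components of $\mathcal{C}$ are the sets of cycles corresponding to connected components of the graph with vertex set $\mathcal{C}$ in which two cycles are adjacent iff they share a vertex. $V(\bigcup\mathcal{S})$ is the union of the vertex sets of the cycles in $\mathcal{S}$. A digraph contains a subdivision of $B(k_1,k_2;k_3)$ if there exist distinct vertices $u,v$ and three pairwise internally vertex-disjoint directed paths: two from $u$ to $v$ of lengths at least $k_1$ and $k_2$, and one from $v$ to $u$ of length at least $k_3$. *)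

theory Defs
  imports Main
begin

text \<open>A digraph is given by a finite vertex set V and an arc set A with A \<subseteq> V \<times> V
  and no loops (parallel arcs are impossible in this encoding; digons are allowed).\<close>

definition digraph :: "'a set \<Rightarrow> ('a \<times> 'a) set \<Rightarrow> bool" where
  "digraph V A \<longleftrightarrow> finite V \<and> A \<subseteq> V \<times> V \<and> (\<forall>x. (x, x) \<notin> A)"

definition dpath :: "('a \<times> 'a) set \<Rightarrow> 'a list \<Rightarrow> bool" where
  "dpath A xs \<longleftrightarrow> xs \<noteq> [] \<and> distinct xs \<and>
     (\<forall>i. i + 1 < length xs \<longrightarrow> (xs ! i, xs ! (i + 1)) \<in> A)"

definition path_len :: "'a list \<Rightarrow> nat" where
  "path_len xs = length xs - 1"

definition dcycle :: "('a \<times> 'a) set \<Rightarrow> 'a list \<Rightarrow> bool" where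
  "dcycle A xs \<longleftrightarrow> length xs \<ge> 2 \<and> distinct xs \<and>
     (\<forall>i < length xs. (xs ! i, xs ! (Suc i mod length xs)) \<in> A)"

definition contains_subdiv_B :: "('a \<times> 'a) set \<Rightarrow> nat \<Rightarrow> nat \<Rightarrow> nat \<Rightarrow> bool" where
  "contains_subdiv_B A k1 k2 k3 \<longleftrightarrow>
     (\<exists>u v P1 P2 P3. u \<noteq> v \<and>
        dpath A P1 \<and> hd P1 = u \<and> last P1 = v \<and> path_len P1 \<ge> k1 \<and>
        dpath A P2 \<and> hd P2 = u \<and> last P2 = v \<and> path_len P2 \<ge> k2 \<and>
        dpath A P3 \<and> hd P3 = v \<and> last P3 = u \<and> path_len P3 \<ge> k3 \<and>
        P1 \<noteq> P2 \<and>
        set P1 \<inter> set P2 \<subseteq> {u, v} \<and>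
        set P1 \<inter> set P3 \<subseteq> {u, v} \<and>
        set P2 \<inter> set P3 \<subseteq> {u, v})"

definition nice :: "('a \<times> 'a) set \<Rightarrow> nat \<Rightarrow> 'a list set \<Rightarrow> bool" where
  "nice A k \<C> \<longleftrightarrow>
     (\<forall>c \<in> \<C>. dcycle A c \<and> length c \<ge> 2 * k - 2) \<and>
     (\<forall>c1 \<in> \<C>. \<forall>c2 \<in> \<C>. c1 \<noteq> c2 \<longrightarrow> card (set c1 \<inter> set c2) \<le> 1)"

definition share_rel :: "'a list set \<Rightarrow> ('a list \<times> 'a list) set" where
  "share_rel \<C> = {(c1, c2). c1 \<in> \<C> \<and> c2 \<in> \<C> \<and> set c1 \<inter> set c2 \<noteq> {}}"

definition is_component :: "'a list set \<Rightarrow> 'a list set \<Rightarrow> bool" where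
  "is_component \<C> \<S> \<longleftrightarrow>
     (\<exists>c0 \<in> \<C>. \<S> = {c \<in> \<C>. (c0, c) \<in> (share_rel \<C>)\<^sup>*})"

definition proper_colouring :: "'a set \<Rightarrow> ('a \<times> 'a) set \<Rightarrow> nat \<Rightarrow> ('a \<Rightarrow> nat) \<Rightarrow> bool" where
  "proper_colouring W A n f \<longleftrightarrow>
     (\<forall>x \<in> W. f x < n) \<and> (\<forall>(x, y) \<in> A. x \<in> W \<longrightarrow> y \<in> W \<longrightarrow> f x \<noteq> f y)"

definition chromatic_number :: "'a set \<Rightarrow> ('a \<times> 'a) set \<Rightarrow> nat" where
  "chromatic_number W A = (LEAST n. \<exists>f. proper_colouring W A n f)"

definition induced_arcs :: "('a \<times> 'a) set \<Rightarrow> 'a set \<Rightarrow> ('a \<times> 'a) set" where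
  "induced_arcs A W = A \<inter> (W \<times> W)"

end

theory Submission
  imports Defs
begin

text \<open>Without a subdivision of B(k,1;1), every chord of a cycle of length at least 2k - 2 jumps
  fewer than k steps forward along the cycle, and some vertex misses its chord of length k - 1;
  that vertex has at most 2k - 3 neighbours on the cycle, so a greedy colouring ending at it
  uses at most 2k - 2 colours. The cycles of a component are then added one at a time. A new
  cycle meeting the part built so far in two vertices, or joined to it by an arc outside their
  common vertex, would again give a B(k,1;1) along a shortest chain of cycles; so the new
  cycle is glued to the old part at a single vertex, and the colourings combine after
  permuting colours.\<close>

section \<open>Directed paths and cycles\<close>

abbreviation adjacent :: "('a \<times> 'a) set \<Rightarrow> 'a \<Rightarrow> 'a \<Rightarrow> bool" where
  "adjacent A x y \<equiv> (x, y) \<in> A \<or> (y, x) \<in> A"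

lemma successively_take: "successively P xs \<Longrightarrow> successively P (take n xs)"
  and successively_drop: "successively P xs \<Longrightarrow> successively P (drop n xs)"
  by (metis append_take_drop_id successively_append_iff)+

lemma dpath_iff_successively:
  "dpath A xs \<longleftrightarrow> xs \<noteq> [] \<and> distinct xs \<and> successively (\<lambda>a b. (a, b) \<in> A) xs"
  unfolding dpath_def successively_conv_nth by auto

lemma dcycle_iff_successively:
  "dcycle A xs \<longleftrightarrow> length xs \<ge> 2 \<and> distinct xs \<and> successively (\<lambda>a b. (a, b) \<in> A) xs \<and>
     (last xs, hd xs) \<in> A"
proof (cases "length xs \<ge> 2")
  case True
  then obtain m where m: "length xs = Suc m" "m > 0" by (cases "length xs") auto
  then have "xs \<noteq> []" by auto
  with m have "(\<forall>i < length xs. (xs ! i, xs ! (Suc i mod length xs)) \<in> A) \<longleftrightarrow>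
        (\<forall>i. Suc i < length xs \<longrightarrow> (xs ! i, xs ! Suc i) \<in> A) \<and> (last xs, hd xs) \<in> A"
    by (auto simp: All_less_Suc hd_conv_nth last_conv_nth)
  then show ?thesis
    unfolding dcycle_def successively_conv_nth by simp
qed (auto simp: dcycle_def)

lemma path_len_ge_1: "dpath A P \<Longrightarrow> hd P \<noteq> last P \<Longrightarrow> path_len P \<ge> 1"
  unfolding dpath_def path_len_def by (cases P; cases "tl P") auto

lemma dpath_arc: "(a, b) \<in> A \<Longrightarrow> a \<noteq> b \<Longrightarrow> dpath A [a, b]"
  by (simp add: dpath_iff_successively)

lemma dpath_singleton: "dpath A [a]"
  by (simp add: dpath_iff_successively)

lemma dpath_concat:
  assumes P: "dpath A P" and Q: "dpath A Q" and PQ: "last P = hd Q" "set P \<inter> set Q \<subseteq> {hd Q}"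
  obtains R where "dpath A R" "hd R = hd P" "last R = last Q" "set R = set P \<union> set Q"
    "path_len R = path_len P + path_len Q"
proof -
  obtain q Q' where Qq: "Q = q # Q'" using Q by (cases Q) (auto simp: dpath_def)
  have Pne: "P \<noteq> []" and "length P > 0" using P by (auto simp: dpath_def)
  then have qP: "q \<in> set P" using PQ Qq by (metis last_in_set list.sel(1))
  have "successively (\<lambda>a b. (a, b) \<in> A) (P @ Q')"
    using P Q PQ Qq Pne by (cases Q') (auto simp: dpath_iff_successively successively_append_iff)
  moreover have "distinct (P @ Q')" using P Q PQ Qq by (auto simp: dpath_def)
  ultimately have "dpath A (P @ Q')" by (simp add: dpath_iff_successively Pne)
  then show thesis
    by (rule that) (use Pne \<open>length P > 0\<close> Qq qP PQ in \<open>auto simp: path_len_def simp del: length_greater_0_conv\<close>)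
qed

lemma dpath_rev: "dpath A P \<Longrightarrow> dpath (A\<inverse>) (rev P)"
  by (simp add: dpath_iff_successively)

lemma dcycle_rev: "dcycle A C \<Longrightarrow> dcycle (A\<inverse>) (rev C)"
  by (auto simp: dcycle_iff_successively hd_rev last_rev)

lemma path_len_rev: "path_len (rev P) = path_len P"
  by (simp add: path_len_def)

lemma contains_subdiv_B_converse:
  assumes "contains_subdiv_B (A\<inverse>) k1 k2 k3"
  shows "contains_subdiv_B A k1 k2 k3"
proof -
  obtain u v P1 P2 P3 where "u \<noteq> v"
    "dpath (A\<inverse>) P1" "hd P1 = u" "last P1 = v" "path_len P1 \<ge> k1"
    "dpath (A\<inverse>) P2" "hd P2 = u" "last P2 = v" "path_len P2 \<ge> k2"
    "dpath (A\<inverse>) P3" "hd P3 = v" "last P3 = u" "path_len P3 \<ge> k3"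
    "P1 \<noteq> P2" "set P1 \<inter> set P2 \<subseteq> {u, v}" "set P1 \<inter> set P3 \<subseteq> {u, v}" "set P2 \<inter> set P3 \<subseteq> {u, v}"
    using assms unfolding contains_subdiv_B_def by blast
  then show ?thesis
    unfolding contains_subdiv_B_def using dpath_rev[of "A\<inverse>"]
    by (intro exI[of _ v] exI[of _ u] exI[of _ "rev P1"] exI[of _ "rev P2"] exI[of _ "rev P3"])
      (auto simp: hd_rev last_rev path_len_rev)
qed

lemma dcycle_rotate: "dcycle A C \<Longrightarrow> dcycle A (rotate n C)"
proof (induction n)
  case (Suc n)
  have "dcycle A (rotate1 C)" if C: "dcycle A C" for C
  proof -
    obtain x xs where "C = x # xs" "xs \<noteq> []"
      using C by (cases C; cases "tl C") (auto simp: dcycle_def)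
    then show ?thesis
      using C by (auto simp: dcycle_iff_successively successively_append_iff successively_Cons)
  qed
  then show ?case using Suc by simp
qed simp

lemma dcycle_subset_vertices:
  assumes "dcycle A C" "A \<subseteq> V \<times> V"
  shows "set C \<subseteq> V"
proof
  fix v assume "v \<in> set C"
  then obtain i where "i < length C" "C ! i = v" by (auto simp: in_set_conv_nth)
  then have "(v, C ! (Suc i mod length C)) \<in> A" using assms(1) by (auto simp: dcycle_def)
  then show "v \<in> V" using assms(2) by blast
qed

lemma finite_dcycles:
  assumes "finite V" "A \<subseteq> V \<times> V"
  shows "finite {C. dcycle A C}"
proof (rule finite_subset[OF _ finite_subset_distinct[OF assms(1)]])
  show "{C. dcycle A C} \<subseteq> {xs. set xs \<subseteq> V \<and> distinct xs}"
    using dcycle_subset_vertices[OF _ assms(2)] by (auto simp: dcycle_def)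
qed

definition forward_dist :: "nat \<Rightarrow> nat \<Rightarrow> nat \<Rightarrow> nat" where
  "forward_dist n i j = (if i \<le> j then j - i else j + n - i)"

lemma forward_dist_mod: "i < n \<Longrightarrow> j < n \<Longrightarrow> (i + forward_dist n i j) mod n = j"
  by (auto simp: forward_dist_def)

lemma forward_dist_bounds: "i < n \<Longrightarrow> j < n \<Longrightarrow> i \<noteq> j \<Longrightarrow> 0 < forward_dist n i j \<and> forward_dist n i j < n"
  by (auto simp: forward_dist_def)

lemma forward_dist_swap: "i < n \<Longrightarrow> j < n \<Longrightarrow> i \<noteq> j \<Longrightarrow> forward_dist n j i = n - forward_dist n i j"
  by (auto simp: forward_dist_def)

lemma dcycle_split_from_head:
  assumes C: "dcycle A C" and d: "0 < d" "d < length C"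
  obtains P1 P2 where "dpath A P1" "hd P1 = C ! 0" "last P1 = C ! d"
    "dpath A P2" "hd P2 = C ! d" "last P2 = C ! 0"
    "set P1 \<inter> set P2 = {C ! 0, C ! d}" "set P1 \<union> set P2 = set C"
    "path_len P1 + path_len P2 = length C" "path_len P1 = d"
proof -
  have dC: "distinct C" and sC: "successively (\<lambda>a b. (a, b) \<in> A) C" and wC: "(last C, hd C) \<in> A"
    using C by (auto simp: dcycle_iff_successively)
  have "C \<noteq> []" using d by (cases C) auto
  then have hdC: "hd C = C ! 0" by (simp add: hd_conv_nth)
  define P1 where "P1 = take (Suc d) C"
  define R where "R = drop (Suc d) C"
  define P2 where "P2 = C ! d # R @ [C ! 0]"
  have C_split: "C = P1 @ R" by (simp add: P1_def R_def)
  have drop_d: "drop d C = C ! d # R" using d by (simp add: R_def Cons_nth_drop_Suc)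
  have lP1: "length P1 = Suc d" using d by (simp add: P1_def)
  then have "P1 \<noteq> []" by auto
  moreover have "P1 ! 0 = C ! 0" "P1 ! d = C ! d" by (simp_all add: P1_def)
  ultimately have P1_ends: "hd P1 = C ! 0" "last P1 = C ! d" "C ! 0 \<in> set P1" "C ! d \<in> set P1"
    using lP1 nth_mem[of 0 P1] nth_mem[of d P1] by (simp_all add: hd_conv_nth last_conv_nth)
  have disj: "set P1 \<inter> set R = {}" and dR: "distinct R"
    using dC C_split by (metis distinct_append)+
  have "dpath A P1"
    using dC sC lP1 by (auto simp: dpath_iff_successively P1_def dest: successively_take)
  moreover have "dpath A P2"
  proof -
    have "successively (\<lambda>a b. (a, b) \<in> A) (drop d C)" using sC by (rule successively_drop)
    moreover have "last (drop d C) = last C" using d by simp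
    ultimately have "successively (\<lambda>a b. (a, b) \<in> A) (drop d C @ [C ! 0])"
      using wC hdC by (simp add: successively_append_iff)
    moreover have "C ! d \<noteq> C ! 0" using nth_eq_iff_index_eq[OF dC, of d 0] d \<open>C \<noteq> []\<close> by simp
    then have "distinct (drop d C @ [C ! 0])" using drop_d disj dR P1_ends by auto
    ultimately show ?thesis by (simp add: dpath_iff_successively P2_def drop_d)
  qed
  moreover have "set P1 \<inter> set P2 = {C ! 0, C ! d}" using disj P1_ends by (auto simp: P2_def)
  moreover have "set P1 \<union> set P2 = set C" using C_split P1_ends by (auto simp: P2_def)
  moreover have "path_len P1 = d" "path_len P2 = length C - d"
    using lP1 d by (simp_all add: path_len_def P2_def R_def)
  ultimately show thesis
    using d P1_ends by (intro that[of P1 P2]) (simp_all add: P2_def)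
qed

lemma dcycle_split_at:
  assumes C: "dcycle A C" and i: "i < length C" and j: "j < length C" and ij: "i \<noteq> j"
  obtains P1 P2 where "dpath A P1" "hd P1 = C ! i" "last P1 = C ! j"
    "dpath A P2" "hd P2 = C ! j" "last P2 = C ! i"
    "set P1 \<inter> set P2 = {C ! i, C ! j}" "set P1 \<union> set P2 = set C"
    "path_len P1 + path_len P2 = length C" "path_len P1 = forward_dist (length C) i j"
proof -
  define d where "d = forward_dist (length C) i j"
  define r where "r = rotate i C"
  have d: "0 < d" "d < length r" using forward_dist_bounds[OF i j ij] by (simp_all add: d_def r_def)
  have "0 < length C" using i by (cases C) auto
  then have r0: "r ! 0 = C ! i" using nth_rotate[of 0 C i] i by (simp add: r_def)
  have rd: "r ! d = C ! j"
    using nth_rotate[of d C i] d forward_dist_mod[OF i j] by (simp add: r_def d_def)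
  have r: "length r = length C" "set r = set C" by (simp_all add: r_def)
  have "dcycle A r" using C by (simp add: r_def dcycle_rotate)
  then show thesis
    by (rule dcycle_split_from_head[OF _ d]) (rule that; simp add: r0 rd r d_def[symmetric])
qed

lemma dcycle_split:
  assumes C: "dcycle A C" and "x \<in> set C" "y \<in> set C" "x \<noteq> y"
  obtains P1 P2 where "dpath A P1" "hd P1 = x" "last P1 = y"
    "dpath A P2" "hd P2 = y" "last P2 = x"
    "set P1 \<inter> set P2 = {x, y}" "set P1 \<union> set P2 = set C" "path_len P1 + path_len P2 = length C"
proof -
  obtain i j where ij: "i < length C" "j < length C" "C ! i = x" "C ! j = y"
    using assms by (auto simp: in_set_conv_nth)
  then have "i \<noteq> j" using \<open>x \<noteq> y\<close> by blast
  show thesis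
    by (rule dcycle_split_at[OF C ij(1,2) \<open>i \<noteq> j\<close>]) (rule that; (unfold ij(3,4)[symmetric])?; assumption)
qed

lemma path_len_le_1_if_subset_doubleton:
  assumes "dpath A P" "set P \<subseteq> {u, v}"
  shows "path_len P \<le> 1"
proof -
  have "length P = card (set P)" using assms(1) by (simp add: dpath_def distinct_card)
  also have "\<dots> \<le> card {u, v}" using assms(2) by (simp add: card_mono)
  also have "\<dots> \<le> 2" by (simp add: card_insert_le_m1)
  finally show ?thesis by (simp add: path_len_def)
qed

text \<open>The two parallel paths are automatically distinct: a path from u to v sharing all its
  vertices with another one has length at most 1.\<close>
lemma subdiv_B_of_theta:
  assumes k: "2 \<le> k" and uv: "u \<noteq> v"
    and P1: "dpath A P1" "hd P1 = u" "last P1 = v" "path_len P1 \<ge> k"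
    and P2: "dpath A P2" "hd P2 = u" "last P2 = v"
    and P3: "dpath A P3" "hd P3 = v" "last P3 = u"
    and "set P1 \<inter> set P2 \<subseteq> {u, v}" "set P1 \<inter> set P3 \<subseteq> {u, v}" "set P2 \<inter> set P3 \<subseteq> {u, v}"
  shows "contains_subdiv_B A k 1 1"
proof -
  have "P1 \<noteq> P2"
  proof
    assume "P1 = P2"
    then have "set P1 \<subseteq> {u, v}" using assms(13) by auto
    then show False using path_len_le_1_if_subset_doubleton[OF P1(1)] P1(4) k by simp
  qed
  moreover have "path_len P2 \<ge> 1" "path_len P3 \<ge> 1"
    using path_len_ge_1 P2 P3 uv by metis+
  ultimately show ?thesis
    unfolding contains_subdiv_B_def using assms(2-15)
    by (intro exI[of _ u] exI[of _ v] exI[of _ P1] exI[of _ P2] exI[of _ P3]) simp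
qed

lemma chord_forward_dist_less:
  assumes C: "dcycle A C" and noB: "\<not> contains_subdiv_B A k 1 1" and k: "2 \<le> k"
    and ij: "i < length C" "j < length C" "i \<noteq> j" and arc: "(C ! i, C ! j) \<in> A"
  shows "forward_dist (length C) i j < k"
proof (rule ccontr)
  assume long: "\<not> forward_dist (length C) i j < k"
  obtain P1 P2 where P: "dpath A P1" "hd P1 = C ! i" "last P1 = C ! j"
    "dpath A P2" "hd P2 = C ! j" "last P2 = C ! i"
    "set P1 \<inter> set P2 = {C ! i, C ! j}" "path_len P1 = forward_dist (length C) i j"
    using dcycle_split_at[OF C ij] by metis
  have "C ! i \<noteq> C ! j" using C ij by (simp add: dcycle_def nth_eq_iff_index_eq)
  then have "dpath A [C ! i, C ! j]" using arc by (rule dpath_arc[rotated])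
  then have "contains_subdiv_B A k 1 1"
    using subdiv_B_of_theta[OF k \<open>C ! i \<noteq> C ! j\<close> P(1-3) _ _ _ _ P(4-6)] P(7,8) long by auto
  with noB show False ..
qed

section \<open>Colouring a single long cycle\<close>

text \<open>Between C ! 0 and C ! (2k - 2) there are three paths: along the cycle up to C ! (k - 2)
  and then by the second chord (length k), by the first and third chords (length 2), and back
  along the rest of the cycle.\<close>
lemma subdiv_B_of_jump_chords:
  assumes C: "dcycle A C" and k: "k \<ge> 3" and len: "length C \<ge> 2 * k - 1"
    and a1: "(C ! 0, C ! (k - 1)) \<in> A" and a2: "(C ! (k - 2), C ! (2 * k - 3)) \<in> A"
    and a3: "(C ! (k - 1), C ! (2 * k - 2)) \<in> A"
  shows "contains_subdiv_B A k 1 1"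
proof -
  define J where "J = k - 1"
  define n where "n = length C"
  have J2: "J \<ge> 2" and Jn: "2 * J < n" using k len by (simp_all add: J_def n_def)
  have dC: "distinct C" and sC: "successively (\<lambda>a b. (a, b) \<in> A) C" and wC: "(last C, hd C) \<in> A"
    using C by (auto simp: dcycle_iff_successively)
  define R where "R = (\<lambda>s t. (C ! s, C ! t) \<in> A)"
  have step: "R t (Suc t)" if "Suc t < n" for t
    using successively_nth[OF sC] that by (simp add: R_def n_def)
  have "C \<noteq> []" using Jn n_def by auto
  then have wrap: "R (n - 1) 0" using wC by (simp add: R_def n_def last_conv_nth hd_conv_nth)
  have jumps: "R 0 J" "R (J - 1) (2 * J - 1)" "R J (2 * J)"
    using a1 a2 a3 k by (auto simp: R_def J_def numeral_eq_Suc mult_2 Suc_diff_le)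
  have upt: "successively R [a..<b]" if "b \<le> n" for a b
    unfolding successively_conv_nth using step that by simp
  define X1 where "X1 = [0..<J] @ [2 * J - 1, 2 * J]"
  define X2 where "X2 = [0, J, 2 * J]"
  define X3 where "X3 = [2 * J..<n] @ [0]"
  have X_succ: "successively R X1" "successively R X2" "successively R X3"
    using upt[of J 0] upt[of n "2 * J"] jumps step[of "2 * J - 1"] wrap J2 Jn
    by (simp_all add: X1_def X2_def X3_def successively_append_iff)
  have X_dist: "distinct X1" "distinct X2" "distinct X3" using J2 Jn by (auto simp: X1_def X2_def X3_def)
  have X_bound: "set X \<subseteq> {..<n}" if "X \<in> {X1, X2, X3}" for X
    using that Jn by (auto simp: X1_def X2_def X3_def)
  have inj: "inj_on (nth C) {..<n}" using dC by (simp add: inj_on_nth n_def)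
  have path: "dpath A (map (nth C) X)"
    if "X \<in> {X1, X2, X3}" "distinct X" "successively R X" "X \<noteq> []" for X
    using that X_bound[OF that(1)] inj
    by (simp add: dpath_iff_successively successively_map R_def distinct_map inj_on_subset)
  have meet: "set (map (nth C) X) \<inter> set (map (nth C) Y) \<subseteq> {C ! 0, C ! (2 * J)}"
    if "X \<in> {X1, X2, X3}" "Y \<in> {X1, X2, X3}" "set X \<inter> set Y \<subseteq> {0, 2 * J}" for X Y
    using that X_bound[OF that(1)] X_bound[OF that(2)] inj
    by (auto simp: inj_on_image_Int[symmetric])
  have uv: "C ! 0 \<noteq> C ! (2 * J)" using nth_eq_iff_index_eq[OF dC, of 0 "2 * J"] \<open>C \<noteq> []\<close> Jn J2 by (simp add: n_def)
  show ?thesis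
  proof (rule subdiv_B_of_theta[of k "C ! 0" "C ! (2 * J)" A "map (nth C) X1" "map (nth C) X2" "map (nth C) X3"])
    show "set (map (nth C) X1) \<inter> set (map (nth C) X2) \<subseteq> {C ! 0, C ! (2 * J)}"
      "set (map (nth C) X1) \<inter> set (map (nth C) X3) \<subseteq> {C ! 0, C ! (2 * J)}"
      "set (map (nth C) X2) \<inter> set (map (nth C) X3) \<subseteq> {C ! 0, C ! (2 * J)}"
      using J2 Jn by (intro meet; auto simp: X1_def X2_def X3_def)+
    show "dpath A (map (nth C) X1)" "dpath A (map (nth C) X2)" "dpath A (map (nth C) X3)"
      using X_succ X_dist by (intro path; simp add: X1_def X2_def X3_def)+
  qed (use k uv J2 Jn in \<open>auto simp: X1_def X2_def X3_def path_len_def J_def upt_conv_Cons\<close>)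
qed

lemma card_cycle_neighbours_le:
  assumes i: "i < length C" and E: "finite E"
    and dist: "\<And>j. j < length C \<Longrightarrow> adjacent A (C ! i) (C ! j) \<Longrightarrow> forward_dist (length C) i j \<in> E"
  shows "card {y \<in> set C. adjacent A (C ! i) y} \<le> card E"
proof -
  have "{y \<in> set C. adjacent A (C ! i) y} \<subseteq> (\<lambda>d. C ! ((i + d) mod length C)) ` E"
  proof
    fix y assume "y \<in> {y \<in> set C. adjacent A (C ! i) y}"
    then obtain j where "j < length C" "y = C ! j" "adjacent A (C ! i) (C ! j)"
      by (auto simp: in_set_conv_nth)
    then show "y \<in> (\<lambda>d. C ! ((i + d) mod length C)) ` E"
      using dist forward_dist_mod[OF i] by force
  qed
  then show ?thesis using E by (meson card_image_le card_mono finite_imageI le_trans)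
qed

lemma dcycle_adjacent_forward_dist:
  assumes C: "dcycle A C" and noB: "\<not> contains_subdiv_B A k 1 1" and k: "2 \<le> k"
    and loopfree: "\<forall>x. (x, x) \<notin> A"
    and ij: "i < length C" "j < length C" and adj: "adjacent A (C ! i) (C ! j)"
  shows "0 < forward_dist (length C) i j" "forward_dist (length C) i j < length C"
    "forward_dist (length C) i j < k \<or> length C < forward_dist (length C) i j + k"
proof -
  have "i \<noteq> j" using adj loopfree by auto
  then show "0 < forward_dist (length C) i j" "forward_dist (length C) i j < length C"
    using forward_dist_bounds ij by blast+
  show "forward_dist (length C) i j < k \<or> length C < forward_dist (length C) i j + k"
    using adj chord_forward_dist_less[OF C noB k] forward_dist_swap[OF ij \<open>i \<noteq> j\<close>]
      \<open>i \<noteq> j\<close> ij by fastforce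
qed

text \<open>Neighbours of C ! i lie at forward distance less than k or more than length C - k;
  without the chord of length k - 1 the distance k - 1 is excluded as well.\<close>
lemma dcycle_degree_if_no_chord:
  assumes C: "dcycle A C" and noB: "\<not> contains_subdiv_B A k 1 1" and k: "k \<ge> 3"
    and n: "length C \<ge> 2 * k - 1" and loopfree: "\<forall>x. (x, x) \<notin> A"
    and i: "i < length C" and no_chord: "(C ! i, C ! ((i + (k - 1)) mod length C)) \<notin> A"
  shows "card {y \<in> set C. adjacent A (C ! i) y} \<le> 2 * k - 3"
proof -
  define E where "E = {1..<k - 1} \<union> {length C + 1 - k..<length C}"
  have k2: "2 \<le> k" using k by simp
  have "forward_dist (length C) i j \<in> E" if j: "j < length C" and adj: "adjacent A (C ! i) (C ! j)" for j
  proof -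
    note d = dcycle_adjacent_forward_dist[OF C noB k2 loopfree i j adj] forward_dist_mod[OF i j]
    have "forward_dist (length C) i j \<noteq> k - 1"
    proof
      assume "forward_dist (length C) i j = k - 1"
      then have "(C ! j, C ! i) \<in> A" using adj no_chord d(4) by auto
      moreover have "i \<noteq> j" using d(1) by (auto simp: forward_dist_def)
      ultimately have "forward_dist (length C) j i < k"
        using chord_forward_dist_less[OF C noB k2] i j by simp
      then show False
        using forward_dist_swap[OF i j \<open>i \<noteq> j\<close>] \<open>forward_dist (length C) i j = k - 1\<close> n k by auto
    qed
    then show ?thesis using d k by (auto simp: E_def)
  qed
  then have "card {y \<in> set C. adjacent A (C ! i) y} \<le> card E"
    using i by (intro card_cycle_neighbours_le) (auto simp: E_def)
  also have "\<dots> \<le> 2 * k - 3"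
    using card_Un_le[of "{1..<k - 1}" "{length C + 1 - k..<length C}"] k n by (simp add: E_def)
  finally show ?thesis .
qed

text \<open>If all chords of length k - 1 were present, three of them would form a B(k,1;1).\<close>
lemma dcycle_low_degree_vertex:
  assumes C: "dcycle A C" and noB: "\<not> contains_subdiv_B A k 1 1" and k: "k \<ge> 3"
    and len: "length C \<ge> 2 * k - 2" and loopfree: "\<forall>x. (x, x) \<notin> A"
  obtains x where "x \<in> set C" "card {y \<in> set C. adjacent A x y} \<le> 2 * k - 3"
proof (cases "length C = 2 * k - 2")
  case True
  then have n0: "0 < length C" using k by simp
  have k2: "2 \<le> k" using k by simp
  have "forward_dist (length C) 0 j \<in> {1..<length C}" if "j < length C" "adjacent A (C ! 0) (C ! j)" for j
    using dcycle_adjacent_forward_dist(1,2)[OF C noB k2 loopfree n0 that] by simp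
  then have "card {y \<in> set C. adjacent A (C ! 0) y} \<le> card {1..<length C}"
    using n0 by (intro card_cycle_neighbours_le) auto
  then show thesis using True k n0 by (intro that[of "C ! 0"]) auto
next
  case False
  define n where "n = length C"
  have n: "n \<ge> 2 * k - 1" using False len by (simp add: n_def)
  then have "C \<noteq> []" using k by (auto simp: n_def)
  have "\<exists>i < n. (C ! i, C ! ((i + (k - 1)) mod n)) \<notin> A"
  proof (rule ccontr)
    assume "\<not> ?thesis"
    then have "(C ! i, C ! ((i + (k - 1)) mod n)) \<in> A" if "i < n" for i using that by blast
    from this[of 0] this[of "k - 2"] this[of "k - 1"] n k \<open>C \<noteq> []\<close>
    have "contains_subdiv_B A k 1 1"
      by (intro subdiv_B_of_jump_chords[OF C k]) (auto simp: n_def numeral_eq_Suc)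
    with noB show False ..
  qed
  then obtain i where "i < n" "(C ! i, C ! ((i + (k - 1)) mod n)) \<notin> A" by blast
  then show thesis
    using dcycle_degree_if_no_chord[OF C noB k _ loopfree] n by (intro that[of "C ! i"]) (auto simp: n_def)
qed

lemma proper_colouring_induced_iff:
  "proper_colouring W (induced_arcs A W) m f \<longleftrightarrow>
     (\<forall>x \<in> W. f x < m) \<and> (\<forall>x y. (x, y) \<in> A \<longrightarrow> x \<in> W \<longrightarrow> y \<in> W \<longrightarrow> f x \<noteq> f y)"
  unfolding proper_colouring_def induced_arcs_def by auto

lemma proper_colouring_insert:
  assumes f: "proper_colouring W (induced_arcs A W) m f" and W: "finite W"
    and x: "(x, x) \<notin> A" and few: "card {y \<in> W. adjacent A x y} < m"
  obtains g where "proper_colouring (insert x W) (induced_arcs A (insert x W)) m g"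
proof -
  define F where "F = f ` {y \<in> W. adjacent A x y}"
  have "finite F" using W by (simp add: F_def)
  moreover have "card F < m"
    using few W card_image_le[of "{y \<in> W. adjacent A x y}" f] by (simp add: F_def)
  ultimately have "\<not> {..<m} \<subseteq> F" using card_mono[of F "{..<m}"] by auto
  then obtain col where col: "col < m" "col \<notin> F" by blast
  have "proper_colouring (insert x W) (induced_arcs A (insert x W)) m (f(x := col))"
    using f col x unfolding proper_colouring_induced_iff F_def by (auto simp: image_iff)
  then show thesis by (rule that)
qed

lemma greedy_colouring:
  assumes "distinct vs" and loopfree: "\<forall>x. (x, x) \<notin> A"
    and few: "\<forall>p < length vs. card {y \<in> set (take p vs). adjacent A (vs ! p) y} < m"
  shows "\<exists>f. proper_colouring (set vs) (induced_arcs A (set vs)) m f"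
  using assms(1,3)
proof (induction vs rule: rev_induct)
  case Nil
  then show ?case by (auto simp: proper_colouring_induced_iff)
next
  case (snoc x vs)
  have "card {y \<in> set (take p vs). adjacent A (vs ! p) y} < m" if "p < length vs" for p
    using snoc.prems(2)[rule_format, of p] that by (simp add: nth_append)
  then obtain f where f: "proper_colouring (set vs) (induced_arcs A (set vs)) m f"
    using snoc by auto
  have few_x: "card {y \<in> set vs. adjacent A x y} < m"
    using snoc.prems(2)[rule_format, of "length vs"] by simp
  obtain g where "proper_colouring (insert x (set vs)) (induced_arcs A (insert x (set vs))) m g"
    by (rule proper_colouring_insert[OF f finite_set spec[OF loopfree] few_x])
  then show ?case by (intro exI[of _ g]) simp
qed

text \<open>The earlier neighbours of a vertex other than the last lie at most k - 1 positions behind it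
  or, around the end of the list, fewer than k - 1 positions ahead of it.\<close>
lemma dcycle_card_earlier_neighbours:
  assumes C: "dcycle A C" and noB: "\<not> contains_subdiv_B A k 1 1" and k: "k \<ge> 3"
    and loopfree: "\<forall>x. (x, x) \<notin> A" and p: "Suc p < length C"
  shows "card {y \<in> set (take p C). adjacent A (C ! p) y} \<le> 2 * k - 3"
proof -
  define n where "n = length C"
  have "{y \<in> set (take p C). adjacent A (C ! p) y} \<subseteq> nth C ` ({p + 1 - k..<p} \<union> {..<p + k - n})"
  proof
    fix y assume "y \<in> {y \<in> set (take p C). adjacent A (C ! p) y}"
    then obtain q where q: "q < p" "y = C ! q" "adjacent A (C ! p) (C ! q)"
      using p by (auto simp: nth_image[symmetric])
    then have "forward_dist n p q < k \<or> n < forward_dist n p q + k"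
      using dcycle_adjacent_forward_dist(3)[OF C noB _ loopfree, of p q] p k by (simp add: n_def)
    then show "y \<in> nth C ` ({p + 1 - k..<p} \<union> {..<p + k - n})"
      using q by (auto simp: forward_dist_def)
  qed
  then have "card {y \<in> set (take p C). adjacent A (C ! p) y} \<le> card {p + 1 - k..<p} + card {..<p + k - n}"
    by (meson card_Un_le card_image_le card_mono finite_Un finite_atLeastLessThan finite_imageI
        finite_lessThan order_trans)
  then show ?thesis using p k by (simp add: n_def)
qed

lemma dcycle_colourable:
  assumes C: "dcycle A C" and noB: "\<not> contains_subdiv_B A k 1 1" and k: "k \<ge> 3"
    and len: "length C \<ge> 2 * k - 2" and loopfree: "\<forall>x. (x, x) \<notin> A"
  shows "\<exists>f. proper_colouring (set C) (induced_arcs A (set C)) (2 * k - 2) f"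
proof -
  obtain x where x: "x \<in> set C" and low: "card {y \<in> set C. adjacent A x y} \<le> 2 * k - 3"
    using dcycle_low_degree_vertex[OF assms] .
  obtain i where i: "i < length C" "C ! i = x" using x by (auto simp: in_set_conv_nth)
  define n where "n = length C"
  define vs where "vs = rotate (Suc i) C"
  have vs: "dcycle A vs" "length vs = n" "set vs = set C"
    using dcycle_rotate[OF C, of "Suc i"] by (simp_all add: vs_def n_def del: rotate_Suc)
  have n: "n \<ge> 4" using len k by (simp add: n_def)
  have "Suc i + (n - 1) = i + n" using n by simp
  then have "(Suc i + (n - 1)) mod n = i" using i by (simp add: n_def)
  then have last_vs: "vs ! (n - 1) = x"
    using nth_rotate[of "n - 1" C "Suc i"] n i by (simp add: vs_def n_def del: rotate_Suc)
  have "card {y \<in> set (take p vs). adjacent A (vs ! p) y} < 2 * k - 2" if p: "p < n" for p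
  proof (cases "p = n - 1")
    case True
    then have "{y \<in> set (take p vs). adjacent A (vs ! p) y} \<subseteq> {y \<in> set C. adjacent A x y}"
      using last_vs vs(3) by (auto dest: in_set_takeD)
    then have "card {y \<in> set (take p vs). adjacent A (vs ! p) y} \<le> card {y \<in> set C. adjacent A x y}"
      by (rule card_mono[rotated]) simp
    then show ?thesis using low k by simp
  next
    case False
    then have "Suc p < length vs" using p vs(2) by simp
    then show ?thesis using dcycle_card_earlier_neighbours[OF vs(1) noB k loopfree] k by fastforce
  qed
  then have "\<forall>p < length vs. card {y \<in> set (take p vs). adjacent A (vs ! p) y} < 2 * k - 2"
    using vs(2) by simp
  moreover have "distinct vs" using vs(1) by (simp add: dcycle_def)
  ultimately have "\<exists>f. proper_colouring (set vs) (induced_arcs A (set vs)) (2 * k - 2) f"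
    using greedy_colouring loopfree by blast
  then show ?thesis by (simp only: vs(3))
qed

section \<open>Chains of cycles\<close>

definition cycle_chain :: "'a list set \<Rightarrow> 'a list list \<Rightarrow> 'a \<Rightarrow> 'a \<Rightarrow> bool" where
  "cycle_chain T Zs s t \<longleftrightarrow> Zs \<noteq> [] \<and> set Zs \<subseteq> T \<and> s \<in> set (hd Zs) \<and> t \<in> set (last Zs) \<and>
     successively (\<lambda>Z Z'. set Z \<inter> set Z' \<noteq> {}) Zs"

definition induced_cycle_chain :: "'a list list \<Rightarrow> 'a \<Rightarrow> 'a \<Rightarrow> bool" where
  "induced_cycle_chain Zs s t \<longleftrightarrow>
     (\<forall>i j. Suc i < j \<and> j < length Zs \<longrightarrow> set (Zs ! i) \<inter> set (Zs ! j) = {}) \<and>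
     (\<forall>j. 0 < j \<and> j < length Zs \<longrightarrow> s \<notin> set (Zs ! j)) \<and>
     (\<forall>j. Suc j < length Zs \<longrightarrow> t \<notin> set (Zs ! j))"

definition cycle_chain_connected :: "'a list set \<Rightarrow> bool" where
  "cycle_chain_connected T \<longleftrightarrow> (\<forall>s \<in> \<Union>(set ` T). \<forall>t \<in> \<Union>(set ` T). \<exists>Zs. cycle_chain T Zs s t)"

lemma cycle_chain_mono: "cycle_chain T Zs s t \<Longrightarrow> T \<subseteq> T' \<Longrightarrow> cycle_chain T' Zs s t"
  by (auto simp: cycle_chain_def)

lemma cycle_chain_singleton: "C \<in> T \<Longrightarrow> s \<in> set C \<Longrightarrow> t \<in> set C \<Longrightarrow> cycle_chain T [C] s t"
  by (simp add: cycle_chain_def)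

lemma cycle_chain_snoc:
  "cycle_chain T Zs s x \<Longrightarrow> x \<in> set C \<Longrightarrow> t \<in> set C \<Longrightarrow> cycle_chain (insert C T) (Zs @ [C]) s t"
  unfolding cycle_chain_def by (auto simp: successively_append_iff)

lemma cycle_chain_Cons:
  "cycle_chain T Zs x t \<Longrightarrow> x \<in> set C \<Longrightarrow> s \<in> set C \<Longrightarrow> cycle_chain (insert C T) (C # Zs) s t"
  unfolding cycle_chain_def by (auto simp: successively_Cons)

lemma cycle_chain_take:
  assumes "cycle_chain T Zs s t" "j < length Zs" "v \<in> set (Zs ! j)"
  shows "cycle_chain T (take (Suc j) Zs) s v"
  using assms unfolding cycle_chain_def
  by (auto simp: last_conv_nth successively_take dest: in_set_takeD)

lemma cycle_chain_drop:
  assumes "cycle_chain T Zs s t" "j < length Zs" "v \<in> set (Zs ! j)"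
  shows "cycle_chain T (drop j Zs) v t"
  using assms unfolding cycle_chain_def
  by (auto simp: hd_drop_conv_nth successively_drop dest: in_set_dropD)

lemma cycle_chain_shortcut:
  assumes "cycle_chain T Zs s t" "i < j" "j < length Zs" "set (Zs ! i) \<inter> set (Zs ! j) \<noteq> {}"
  shows "cycle_chain T (take (Suc i) Zs @ drop j Zs) s t"
proof -
  have "last (take (Suc i) Zs) = Zs ! i" "hd (drop j Zs) = Zs ! j"
    using assms(2,3) by (simp_all add: take_Suc_conv_app_nth hd_drop_conv_nth)
  then show ?thesis
    using assms unfolding cycle_chain_def
    by (auto simp: successively_append_iff successively_take successively_drop
        dest: in_set_takeD in_set_dropD)
qed

lemma shorter_cycle_chain_if_not_induced:
  assumes ch: "cycle_chain T Zs s t" and "\<not> induced_cycle_chain Zs s t"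
  obtains Ys where "cycle_chain T Ys s t" "length Ys < length Zs"
proof -
  consider (meet) i j where "Suc i < j" "j < length Zs" "set (Zs ! i) \<inter> set (Zs ! j) \<noteq> {}"
    | (start) j where "0 < j" "j < length Zs" "s \<in> set (Zs ! j)"
    | (finish) j where "Suc j < length Zs" "t \<in> set (Zs ! j)"
    using assms(2) unfolding induced_cycle_chain_def by blast
  then show thesis
  proof cases
    case meet
    then show thesis using cycle_chain_shortcut[OF ch, of i j] by (intro that[of "take (Suc i) Zs @ drop j Zs"]) auto
  next
    case start
    then show thesis using cycle_chain_drop[OF ch, of j s] by (intro that[of "drop j Zs"]) auto
  next
    case finish
    then show thesis using cycle_chain_take[OF ch, of j t] by (intro that[of "take (Suc j) Zs"]) auto
  qed
qed

lemma induced_cycle_chain_exists: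
  assumes "cycle_chain T Zs s t"
  obtains Gs where "cycle_chain T Gs s t" "induced_cycle_chain Gs s t" "length Gs \<le> length Zs"
proof -
  obtain Gs where Gs: "cycle_chain T Gs s t" "length Gs \<le> length Zs"
    and min: "\<And>Ys. cycle_chain T Ys s t \<Longrightarrow> length Gs \<le> length Ys"
    using ex_has_least_nat[of "\<lambda>Ys. cycle_chain T Ys s t" Zs length] assms by blast
  then have "induced_cycle_chain Gs s t"
    using shorter_cycle_chain_if_not_induced by (metis not_le)
  then show thesis by (rule that[OF Gs(1) _ Gs(2)])
qed

definition pairwise_meet_le_1 :: "'a list set \<Rightarrow> bool" where
  "pairwise_meet_le_1 T \<longleftrightarrow> (\<forall>Z1 \<in> T. \<forall>Z2 \<in> T. Z1 \<noteq> Z2 \<longrightarrow> card (set Z1 \<inter> set Z2) \<le> 1)"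

lemma ex_set_conv_ex_nth: "(\<exists>x \<in> set xs. P x) \<longleftrightarrow> (\<exists>i < length xs. P (xs ! i))"
  by (auto simp: set_conv_nth)

lemma in_UN_set_conv_nth: "v \<in> \<Union>(set ` set Zs) \<longleftrightarrow> (\<exists>j < length Zs. v \<in> set (Zs ! j))"
  using ex_set_conv_ex_nth[of Zs "\<lambda>W. v \<in> set W"] by simp

lemma induced_cycle_chainD:
  assumes "induced_cycle_chain Zs s t"
  shows "Suc i < j \<Longrightarrow> j < length Zs \<Longrightarrow> set (Zs ! i) \<inter> set (Zs ! j) = {}"
    and "0 < j \<Longrightarrow> j < length Zs \<Longrightarrow> s \<notin> set (Zs ! j)"
    and "Suc j < length Zs \<Longrightarrow> t \<notin> set (Zs ! j)"
  using assms unfolding induced_cycle_chain_def by blast+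

lemma induced_cycle_chain_consecutive:
  assumes ch: "cycle_chain T Zs s t" and ind: "induced_cycle_chain Zs s t"
    and T: "pairwise_meet_le_1 T" and i: "Suc i < length Zs"
  obtains c where "set (Zs ! i) \<inter> set (Zs ! Suc i) = {c}"
proof -
  have succ: "successively (\<lambda>Z Z'. set Z \<inter> set Z' \<noteq> {}) Zs" and sub: "set Zs \<subseteq> T"
    and t: "t \<in> set (last Zs)" using ch by (auto simp: cycle_chain_def)
  have meet: "set (Zs ! i) \<inter> set (Zs ! Suc i) \<noteq> {}" using successively_nth[OF succ i] .
  have "Zs ! i \<noteq> Zs ! Suc i"
  proof (cases "Suc (Suc i) < length Zs")
    case True
    then have "set (Zs ! i) \<inter> set (Zs ! Suc (Suc i)) = {}"
      using ind by (simp add: induced_cycle_chain_def)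
    then show ?thesis using successively_nth[OF succ True] by auto
  next
    case False
    then have "Suc i = length Zs - 1" using i by simp
    moreover have "Zs \<noteq> []" using i by auto
    ultimately have "Zs ! Suc i = last Zs" by (simp add: last_conv_nth)
    then show ?thesis using t ind i by (auto simp: induced_cycle_chain_def)
  qed
  moreover have "Zs ! i \<in> T" "Zs ! Suc i \<in> T" using sub i by auto
  ultimately have "card (set (Zs ! i) \<inter> set (Zs ! Suc i)) \<le> 1"
    using T unfolding pairwise_meet_le_1_def by blast
  moreover have "card (set (Zs ! i) \<inter> set (Zs ! Suc i)) \<noteq> 0" using meet by simp
  ultimately have "card (set (Zs ! i) \<inter> set (Zs ! Suc i)) = 1" by linarith
  then show thesis by (metis card_1_singletonE that)
qed

lemma induced_cycle_chain_Cons: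
  assumes ch: "cycle_chain T (Z # Zs) s t" and ind: "induced_cycle_chain (Z # Zs) s t"
    and "Zs \<noteq> []" and c: "c \<in> set Z" "c \<in> set (hd Zs)"
  shows "cycle_chain T Zs c t" "induced_cycle_chain Zs c t"
proof -
  show "cycle_chain T Zs c t" using assms by (auto simp: cycle_chain_def successively_Cons)
  have "set ((Z # Zs) ! 0) \<inter> set ((Z # Zs) ! Suc j) = {}" if "0 < j" "j < length Zs" for j
    using ind that unfolding induced_cycle_chain_def by (metis Suc_less_eq length_Cons)
  then show "induced_cycle_chain Zs c t"
    using ind c unfolding induced_cycle_chain_def by fastforce
qed

lemma induced_cycle_chain_Cons_meet:
  assumes ind: "induced_cycle_chain (Z # Zs) s t" and "Zs \<noteq> []" and c: "set Z \<inter> set (hd Zs) = {c}"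
  shows "set Z \<inter> \<Union>(set ` set Zs) \<subseteq> {c}"
proof
  fix v assume "v \<in> set Z \<inter> \<Union>(set ` set Zs)"
  then obtain j where j: "j < length Zs" "v \<in> set (Zs ! j)" "v \<in> set Z"
    unfolding Int_iff in_UN_set_conv_nth by blast
  show "v \<in> {c}"
  proof (cases j)
    case 0
    then show ?thesis using c j \<open>Zs \<noteq> []\<close> by (auto simp: hd_conv_nth)
  next
    case (Suc j')
    then show ?thesis using induced_cycle_chainD(1)[OF ind, of 0 "Suc j"] j by auto
  qed
qed

lemma dpaths_through_cycle:
  assumes Z: "dcycle A Z" "s \<in> set Z" "c \<in> set Z" "s \<noteq> c"
    and Q0: "dpath A Q0" "hd Q0 = t" "last Q0 = c" and R0: "dpath A R0" "hd R0 = c" "last R0 = t"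
    and meet: "(set Q0 \<union> set R0) \<inter> set Z \<subseteq> {c}"
  obtains Q R where "dpath A Q" "hd Q = t" "last Q = s" "dpath A R" "hd R = s" "last R = t"
    "set Q \<union> set R \<subseteq> set Z \<union> set Q0 \<union> set R0"
proof -
  obtain P1 P2 where P: "dpath A P1" "hd P1 = s" "last P1 = c" "dpath A P2" "hd P2 = c" "last P2 = s"
      "set P1 \<inter> set P2 = {s, c}" "set P1 \<union> set P2 = set Z" "path_len P1 + path_len P2 = length Z"
    by (rule dcycle_split[OF Z])
  have "last Q0 = hd P2" "set Q0 \<inter> set P2 \<subseteq> {hd P2}" using Q0 P meet by auto
  then obtain Q where Q: "dpath A Q" "hd Q = hd Q0" "last Q = last P2" "set Q = set Q0 \<union> set P2"
      "path_len Q = path_len Q0 + path_len P2"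
    by (rule dpath_concat[OF Q0(1) P(4)])
  have "last P1 = hd R0" "set P1 \<inter> set R0 \<subseteq> {hd R0}" using R0 P meet by auto
  then obtain R where R: "dpath A R" "hd R = hd P1" "last R = last R0" "set R = set P1 \<union> set R0"
      "path_len R = path_len P1 + path_len R0"
    by (rule dpath_concat[OF P(1) R0(1)])
  have sub: "set Q \<union> set R \<subseteq> set Z \<union> set Q0 \<union> set R0" using Q(4) R(4) P(8) by blast
  show thesis
    by (rule that[OF Q(1) _ _ R(1) _ _ sub]) (simp_all add: Q(2,3) R(2,3) P(2,6) Q0(2) R0(3))
qed

lemma induced_cycle_chain_paths:
  assumes "cycle_chain T Zs s t" "induced_cycle_chain Zs s t" "s \<noteq> t"
    and cycles: "\<forall>Z \<in> T. dcycle A Z" and T: "pairwise_meet_le_1 T"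
  obtains Q R where "dpath A Q" "hd Q = t" "last Q = s" "dpath A R" "hd R = s" "last R = t"
    "set Q \<union> set R \<subseteq> \<Union>(set ` set Zs)"
  using assms(1-3)
proof (induction Zs arbitrary: s thesis)
  case Nil
  then show ?case by (simp add: cycle_chain_def)
next
  case (Cons Z Zs)
  have Z: "dcycle A Z" "s \<in> set Z" using Cons.prems cycles by (auto simp: cycle_chain_def)
  show ?case
  proof (cases "Zs = []")
    case True
    then have "t \<in> set Z" using Cons.prems by (simp add: cycle_chain_def)
    then obtain P1 P2 where "dpath A P1" "hd P1 = s" "last P1 = t"
      "dpath A P2" "hd P2 = t" "last P2 = s" "set P1 \<inter> set P2 = {s, t}" "set P1 \<union> set P2 = set Z"
      "path_len P1 + path_len P2 = length Z"
      by (rule dcycle_split[OF Z _ \<open>s \<noteq> t\<close>])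
    then show ?thesis by (intro Cons.prems(1)[of P2 P1]) auto
  next
    case False
    obtain c where c: "set Z \<inter> set (hd Zs) = {c}"
      using induced_cycle_chain_consecutive[OF Cons.prems(2,3) T, of 0] False by (auto simp: hd_conv_nth)
    then have "c \<in> set Z" "c \<in> set (hd Zs)" by auto
    note tail = induced_cycle_chain_Cons[OF Cons.prems(2,3) False this]
    note ind = induced_cycle_chainD[OF Cons.prems(3)]
    have "t \<notin> set Z" "s \<notin> set (hd Zs)"
      using ind(3)[of 0] ind(2)[of 1] False by (simp_all add: hd_conv_nth)
    then have "c \<noteq> t" "s \<noteq> c" using c by auto
    obtain Q0 R0 where QR0: "dpath A Q0" "hd Q0 = t" "last Q0 = c" "dpath A R0" "hd R0 = c" "last R0 = t"
      "set Q0 \<union> set R0 \<subseteq> \<Union>(set ` set Zs)"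
      using Cons.IH[OF _ tail \<open>c \<noteq> t\<close>] by blast
    have "(set Q0 \<union> set R0) \<inter> set Z \<subseteq> {c}"
      using QR0(7) induced_cycle_chain_Cons_meet[OF Cons.prems(3) False c] by blast
    then obtain Q R where "dpath A Q" "hd Q = t" "last Q = s" "dpath A R" "hd R = s" "last R = t"
      "set Q \<union> set R \<subseteq> set Z \<union> set Q0 \<union> set R0"
      by (rule dpaths_through_cycle[OF Z \<open>c \<in> set Z\<close> \<open>s \<noteq> c\<close> QR0(1-6)])
    then show ?thesis using QR0(7) by (intro Cons.prems(1)) auto
  qed
qed

lemma induced_cycle_chain_butlast:
  assumes ch: "cycle_chain T Zs s t" and ind: "induced_cycle_chain Zs s t"
    and m: "length Zs = Suc m" "0 < m" and c: "c \<in> set (Zs ! (m - 1))" "c \<in> set (Zs ! m)"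
  shows "cycle_chain T (butlast Zs) s c" "induced_cycle_chain (butlast Zs) s c"
proof -
  have bl: "butlast Zs = take (Suc (m - 1)) Zs" using m by (simp add: butlast_conv_take)
  show "cycle_chain T (butlast Zs) s c" unfolding bl using cycle_chain_take[OF ch, of "m - 1" c] m c by simp
  show "induced_cycle_chain (butlast Zs) s c"
    unfolding induced_cycle_chain_def
  proof (intro conjI allI impI)
    fix i j assume "Suc i < j \<and> j < length (butlast Zs)"
    then show "set (butlast Zs ! i) \<inter> set (butlast Zs ! j) = {}"
      using induced_cycle_chainD(1)[OF ind, of i j] m by (simp add: nth_butlast)
  next
    fix j assume "0 < j \<and> j < length (butlast Zs)"
    then show "s \<notin> set (butlast Zs ! j)"
      using induced_cycle_chainD(2)[OF ind, of j] m by (simp add: nth_butlast)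
  next
    fix j assume "Suc j < length (butlast Zs)"
    then show "c \<notin> set (butlast Zs ! j)"
      using induced_cycle_chainD(1)[OF ind, of j m] m c(2) by (auto simp: nth_butlast)
  qed
qed

lemma induced_cycle_chain_butlast_meet:
  assumes ind: "induced_cycle_chain Zs s t" and m: "length Zs = Suc m"
    and c: "set (Zs ! (m - 1)) \<inter> set (Zs ! m) = {c}"
  shows "\<Union>(set ` set (butlast Zs)) \<inter> set (Zs ! m) \<subseteq> {c}"
proof
  fix v assume "v \<in> \<Union>(set ` set (butlast Zs)) \<inter> set (Zs ! m)"
  then obtain j where "j < length (butlast Zs)" "v \<in> set (butlast Zs ! j)" and vm: "v \<in> set (Zs ! m)"
    unfolding Int_iff in_UN_set_conv_nth by blast
  then have j: "j < m" "v \<in> set (Zs ! j)" using m nth_butlast[of j Zs] by simp_all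
  show "v \<in> {c}"
  proof (cases "j = m - 1")
    case True
    then show ?thesis using c j(2) vm by blast
  next
    case False
    then have "set (Zs ! j) \<inter> set (Zs ! m) = {}" using induced_cycle_chainD(1)[OF ind, of j m] j(1) m by simp
    then show ?thesis using j(2) vm by blast
  qed
qed

lemma induced_cycle_chain_last_entry:
  assumes ch: "cycle_chain T Zs s t" and ind: "induced_cycle_chain Zs s t" and "s \<noteq> t"
    and cycles: "\<forall>Z \<in> T. dcycle A Z" and T: "pairwise_meet_le_1 T"
  obtains c Q R where "c \<in> set (last Zs)" "c \<noteq> t" "dpath A Q" "hd Q = c" "last Q = s"
    "dpath A R" "hd R = s" "last R = c"
    "set Q \<union> set R \<subseteq> insert s (\<Union>(set ` set (butlast Zs)))"
    "(set Q \<union> set R) \<inter> set (last Zs) \<subseteq> {c}"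
proof (cases "length Zs = 1")
  case True
  then have "hd Zs = last Zs" by (cases Zs) auto
  then have "s \<in> set (last Zs)" using ch by (simp add: cycle_chain_def)
  then show thesis using \<open>s \<noteq> t\<close> dpath_singleton[of A s] by (intro that[of s "[s]" "[s]"]) auto
next
  case False
  have "Zs \<noteq> []" using ch by (simp add: cycle_chain_def)
  then obtain m where m: "length Zs = Suc m" "0 < m" using False by (cases "length Zs") auto
  have last: "last Zs = Zs ! m" using m \<open>Zs \<noteq> []\<close> by (simp add: last_conv_nth)
  obtain c where c: "set (Zs ! (m - 1)) \<inter> set (Zs ! m) = {c}"
    using induced_cycle_chain_consecutive[OF ch ind T, of "m - 1"] m by auto
  note ind' = induced_cycle_chainD[OF ind]
  have "t \<notin> set (Zs ! (m - 1))" "s \<notin> set (Zs ! m)" using ind'(2,3) m by auto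
  then have "c \<noteq> t" "s \<noteq> c" using c by auto
  have c_in: "c \<in> set (Zs ! (m - 1))" "c \<in> set (Zs ! m)" using c by auto
  note butlast = induced_cycle_chain_butlast[OF ch ind m c_in]
  obtain Q R where QR: "dpath A Q" "hd Q = c" "last Q = s" "dpath A R" "hd R = s" "last R = c"
    "set Q \<union> set R \<subseteq> \<Union>(set ` set (butlast Zs))"
    by (rule induced_cycle_chain_paths[OF butlast \<open>s \<noteq> c\<close> cycles T])
  have "\<Union>(set ` set (butlast Zs)) \<inter> set (Zs ! m) \<subseteq> {c}"
    by (rule induced_cycle_chain_butlast_meet[OF ind m(1) c])
  then have "(set Q \<union> set R) \<inter> set (last Zs) \<subseteq> {c}" using QR(7) unfolding last by blast
  moreover have "c \<in> set (last Zs)" using c_in last by simp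
  ultimately show thesis using QR \<open>c \<noteq> t\<close> by (intro that[of c Q R]) auto
qed

section \<open>Two long cycles joined by paths\<close>

text \<open>Two long cycles C and Z touching at x, and joined by a pair of opposite paths between
  y \<in> C and c \<in> Z avoiding both cycles otherwise: going around C through the paths gives two
  paths between c and x of total length at least 2k, one of which forms a B(k,1;1) with Z.\<close>
lemma subdiv_B_of_touching_linked_cycles:
  assumes k: "k \<ge> 3"
    and C: "dcycle A C" "length C \<ge> 2 * k - 2" "x \<in> set C" "y \<in> set C" "x \<noteq> y"
    and Z: "dcycle A Z" "c \<in> set Z" "x \<in> set Z" "c \<noteq> x" "y \<notin> set Z"
    and Q: "dpath A Q" "hd Q = c" "last Q = y" and R: "dpath A R" "hd R = y" "last R = c"
    and QR_C: "(set Q \<union> set R) \<inter> set C \<subseteq> {y}" and QR_Z: "(set Q \<union> set R) \<inter> set Z \<subseteq> {c}"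
    and CZ: "set C \<inter> set Z \<subseteq> {x}"
  shows "contains_subdiv_B A k 1 1"
proof -
  obtain Cxy Cyx where Cs: "dpath A Cxy" "hd Cxy = x" "last Cxy = y" "dpath A Cyx" "hd Cyx = y" "last Cyx = x"
      "set Cxy \<inter> set Cyx = {x, y}" "set Cxy \<union> set Cyx = set C" "path_len Cxy + path_len Cyx = length C"
    by (rule dcycle_split[OF C(1,3,4,5)])
  obtain Zcx Zxc where Zs: "dpath A Zcx" "hd Zcx = c" "last Zcx = x" "dpath A Zxc" "hd Zxc = x" "last Zxc = c"
      "set Zcx \<inter> set Zxc = {c, x}" "set Zcx \<union> set Zxc = set Z" "path_len Zcx + path_len Zxc = length Z"
    by (rule dcycle_split[OF Z(1-4)])
  have "last Q = hd Cyx" "set Q \<inter> set Cyx \<subseteq> {hd Cyx}" using Q Cs QR_C by auto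
  then obtain P where P: "dpath A P" "hd P = hd Q" "last P = last Cyx" "set P = set Q \<union> set Cyx"
      "path_len P = path_len Q + path_len Cyx"
    by (rule dpath_concat[OF Q(1) Cs(4)])
  have "last Cxy = hd R" "set Cxy \<inter> set R \<subseteq> {hd R}" using R Cs QR_C by auto
  then obtain P' where P': "dpath A P'" "hd P' = hd Cxy" "last P' = last R" "set P' = set Cxy \<union> set R"
      "path_len P' = path_len Cxy + path_len R"
    by (rule dpath_concat[OF Cs(1) R(1)])
  have "c \<noteq> y" using Z by auto
  then have "path_len Q \<ge> 1" "path_len R \<ge> 1" using path_len_ge_1 Q R by metis+
  then have long: "path_len P \<ge> k \<or> path_len P' \<ge> k" using P(5) P'(5) Cs(9) C(2) k by linarith
  have meet: "set P \<inter> set Zcx \<subseteq> {c, x}" "set P \<inter> set Zxc \<subseteq> {c, x}"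
    "set P' \<inter> set Zxc \<subseteq> {x, c}" "set P' \<inter> set Zcx \<subseteq> {x, c}" "set Zxc \<inter> set Zcx \<subseteq> {x, c}"
    using P(4) P'(4) Cs(8) Zs(7,8) QR_Z CZ by blast+
  have k2: "2 \<le> k" using k by simp
  from long show ?thesis
  proof
    assume "path_len P \<ge> k"
    with P Q Cs show ?thesis
      using subdiv_B_of_theta[OF k2 Z(4), of A P Zcx Zxc] Zs meet by simp
  next
    assume "path_len P' \<ge> k"
    with P' R Cs show ?thesis
      using subdiv_B_of_theta[OF k2 Z(4)[symmetric], of A P' Zxc Zcx] Zs meet by simp
  qed
qed

text \<open>Either the part of Z from c to b has length at least k,
  and Q, then C from x to a, then the arc form a second path from c to b; or the part of Z
  from b to c has length at least k - 1, and the arc, that part and Q form a path of length at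
  least k from a to x, parallel to C from a to x.\<close>
lemma subdiv_B_of_cross_arc:
  assumes k: "k \<ge> 3"
    and C: "dcycle A C" "x \<in> set C" "a \<in> set C" "a \<noteq> x"
    and Z: "dcycle A Z" "length Z \<ge> 2 * k - 2" "c \<in> set Z" "b \<in> set Z" "b \<noteq> c"
    and Q: "dpath A Q" "hd Q = c" "last Q = x" and R: "dpath A R" "hd R = x" "last R = c"
    and C_meet: "set C \<inter> (set Z \<union> set Q \<union> set R) \<subseteq> {x}" "set C \<inter> set Z \<subseteq> {c}"
    and QR_Z: "(set Q \<union> set R) \<inter> set Z \<subseteq> {c}"
    and ab: "(a, b) \<in> A"
  shows "contains_subdiv_B A k 1 1"
proof -
  have a_out: "a \<notin> set Z \<union> set Q \<union> set R" using C(3,4) C_meet(1) by blast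
  have b_out: "b \<notin> set C \<union> set Q \<union> set R" using Z(4,5) C_meet(2) QR_Z by blast
  have k2: "2 \<le> k" using k by simp
  have AB: "dpath A [a, b]" using dpath_arc[OF ab] a_out Z(4) by auto
  obtain Cax Cxa where Cs: "dpath A Cax" "hd Cax = a" "last Cax = x" "dpath A Cxa" "hd Cxa = x" "last Cxa = a"
      "set Cax \<inter> set Cxa = {a, x}" "set Cax \<union> set Cxa = set C" "path_len Cax + path_len Cxa = length C"
    by (rule dcycle_split[OF C(1,3,2,4)])
  obtain Zcb Zbc where Zs: "dpath A Zcb" "hd Zcb = c" "last Zcb = b" "dpath A Zbc" "hd Zbc = b" "last Zbc = c"
      "set Zcb \<inter> set Zbc = {c, b}" "set Zcb \<union> set Zbc = set Z" "path_len Zcb + path_len Zbc = length Z"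
    by (rule dcycle_split[OF Z(1,3,4) Z(5)[symmetric]])
  show ?thesis
  proof (cases "path_len Zcb \<ge> k")
    case True
    have "last Q = hd Cxa" "set Q \<inter> set Cxa \<subseteq> {hd Cxa}" using Q Cs C_meet(1) by auto
    then obtain P0 where P0: "dpath A P0" "hd P0 = hd Q" "last P0 = last Cxa" "set P0 = set Q \<union> set Cxa"
        "path_len P0 = path_len Q + path_len Cxa"
      by (rule dpath_concat[OF Q(1) Cs(4)])
    have "last P0 = hd [a, b]" "set P0 \<inter> set [a, b] \<subseteq> {hd [a, b]}" using P0 Cs b_out by auto
    then obtain P where P: "dpath A P" "hd P = hd P0" "last P = last [a, b]" "set P = set P0 \<union> set [a, b]"
        "path_len P = path_len P0 + path_len [a, b]"
      by (rule dpath_concat[OF P0(1) AB])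
    have "set P \<inter> set Z \<subseteq> {c, b}" using P(4) P0(4) Cs(8) C_meet QR_Z a_out by auto
    then show ?thesis
      using subdiv_B_of_theta[OF k2 Z(5)[symmetric], of A Zcb P Zbc] True Zs P P0 Q by auto
  next
    case False
    then have long: "path_len Zbc \<ge> k - 1" using Zs(9) Z(2) by linarith
    have "last [a, b] = hd Zbc" "set [a, b] \<inter> set Zbc \<subseteq> {hd Zbc}" using Zs a_out by auto
    then obtain P0 where P0: "dpath A P0" "hd P0 = hd [a, b]" "last P0 = last Zbc" "set P0 = set [a, b] \<union> set Zbc"
        "path_len P0 = path_len [a, b] + path_len Zbc"
      by (rule dpath_concat[OF AB Zs(4)])
    have "last P0 = hd Q" "set P0 \<inter> set Q \<subseteq> {hd Q}" using P0 Zs(6,8) Q(2) QR_Z a_out b_out by auto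
    then obtain P where P: "dpath A P" "hd P = hd P0" "last P = last Q" "set P = set P0 \<union> set Q"
        "path_len P = path_len P0 + path_len Q"
      by (rule dpath_concat[OF P0(1) Q(1)])
    have "set P \<inter> set C \<subseteq> {a, x}" using P(4) P0(4) Zs(8) C_meet b_out by auto
    moreover have "path_len P \<ge> k" using P(5) P0(5) long k by (simp add: path_len_def)
    ultimately show ?thesis
      using subdiv_B_of_theta[OF k2 C(4), of A P Cax Cxa] Cs P P0 Q by auto
  qed
qed

lemma subdiv_B_of_cross_adjacency:
  assumes k: "k \<ge> 3"
    and C: "dcycle A C" "x \<in> set C" "a \<in> set C" "a \<noteq> x"
    and Z: "dcycle A Z" "length Z \<ge> 2 * k - 2" "c \<in> set Z" "b \<in> set Z" "b \<noteq> c"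
    and Q: "dpath A Q" "hd Q = c" "last Q = x" and R: "dpath A R" "hd R = x" "last R = c"
    and C_meet: "set C \<inter> (set Z \<union> set Q \<union> set R) \<subseteq> {x}" "set C \<inter> set Z \<subseteq> {c}"
    and QR_Z: "(set Q \<union> set R) \<inter> set Z \<subseteq> {c}"
    and adj: "adjacent A a b"
  shows "contains_subdiv_B A k 1 1"
proof (cases "(a, b) \<in> A")
  case True
  then show ?thesis using subdiv_B_of_cross_arc[OF assms(1-19)] by blast
next
  case False
  then have "(a, b) \<in> A\<inverse>" using adj by simp
  moreover note dcycle_rev[OF C(1)] dcycle_rev[OF Z(1)] dpath_rev[OF R(1)] dpath_rev[OF Q(1)]
  ultimately have "contains_subdiv_B (A\<inverse>) k 1 1"
    using subdiv_B_of_cross_arc[of k "A\<inverse>" "rev C" x a "rev Z" c b "rev R" "rev Q"] assms(1-19)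
    by (auto simp: hd_rev last_rev Un_ac)
  then show ?thesis by (rule contains_subdiv_B_converse)
qed

section \<open>Colouring a component of a nice collection\<close>

lemma nice_subset: "nice A k Cs \<Longrightarrow> T \<subseteq> Cs \<Longrightarrow> nice A k T"
  unfolding nice_def by blast

lemma nice_cycle: "nice A k T \<Longrightarrow> Z \<in> T \<Longrightarrow> dcycle A Z \<and> length Z \<ge> 2 * k - 2"
  unfolding nice_def by blast

lemma nice_pairwise_meet_le_1: "nice A k T \<Longrightarrow> pairwise_meet_le_1 T"
  unfolding nice_def pairwise_meet_le_1_def by blast

lemma shortest_cycle_chain_within:
  assumes "x0 \<in> S" "y0 \<in> S" "x0 \<noteq> y0" "cycle_chain T Zs y0 x0"
  obtains x y Gs where "x \<in> S" "y \<in> S" "x \<noteq> y" "cycle_chain T Gs y x" "induced_cycle_chain Gs y x"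
    "\<And>x' y' Zs'. x' \<in> S \<Longrightarrow> y' \<in> S \<Longrightarrow> x' \<noteq> y' \<Longrightarrow> cycle_chain T Zs' y' x' \<Longrightarrow> length Gs \<le> length Zs'"
proof -
  define P where "P Ys \<longleftrightarrow> (\<exists>x \<in> S. \<exists>y \<in> S. x \<noteq> y \<and> cycle_chain T Ys y x)" for Ys
  obtain Ys where "P Ys" and min: "\<And>Ys'. P Ys' \<Longrightarrow> length Ys \<le> length Ys'"
    using ex_has_least_nat[of P Zs length] assms by (auto simp: P_def)
  then obtain x y where xy: "x \<in> S" "y \<in> S" "x \<noteq> y" "cycle_chain T Ys y x" by (auto simp: P_def)
  obtain Gs where Gs: "cycle_chain T Gs y x" "induced_cycle_chain Gs y x" "length Gs \<le> length Ys"
    by (rule induced_cycle_chain_exists[OF xy(4)])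
  show thesis
  proof (rule that[OF xy(1-3) Gs(1,2)])
    fix x' y' Zs' assume "x' \<in> S" "y' \<in> S" "x' \<noteq> y'" "cycle_chain T Zs' y' x'"
    then have "length Ys \<le> length Zs'" using min by (auto simp: P_def)
    then show "length Gs \<le> length Zs'" using Gs(3) min[of Gs] xy Gs(1) by (auto simp: P_def)
  qed
qed

lemma shortest_cycle_chain_meets:
  assumes G: "cycle_chain T Gs y x" and xy: "x \<in> S" "y \<in> S"
    and min: "\<And>x' y' Zs'. x' \<in> S \<Longrightarrow> y' \<in> S \<Longrightarrow> x' \<noteq> y' \<Longrightarrow> cycle_chain T Zs' y' x' \<Longrightarrow>
      length Gs \<le> length Zs'"
  shows "S \<inter> \<Union>(set ` set (butlast Gs)) \<subseteq> {y}" and "length Gs = 1 \<or> S \<inter> set (last Gs) \<subseteq> {x}"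
proof
  fix v assume "v \<in> S \<inter> \<Union>(set ` set (butlast Gs))"
  then obtain j where j: "j < length (butlast Gs)" "v \<in> set (butlast Gs ! j)" "v \<in> S"
    unfolding Int_iff in_UN_set_conv_nth by blast
  then have "v \<in> set (Gs ! j)" "j < length Gs" by (simp_all add: nth_butlast)
  show "v \<in> {y}"
  proof (rule ccontr)
    assume "v \<notin> {y}"
    then have "length Gs \<le> length (take (Suc j) Gs)"
      using min[OF j(3) xy(2) _ cycle_chain_take[OF G]] \<open>v \<in> set (Gs ! j)\<close> \<open>j < length Gs\<close> by auto
    then show False using j(1) by simp
  qed
next
  have "Gs \<noteq> []" "last Gs \<in> T" "x \<in> set (last Gs)" using G by (auto simp: cycle_chain_def)
  have "length Gs \<le> 1" if "v \<in> S" "v \<in> set (last Gs)" "v \<noteq> x" for v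
    using min[OF xy(1) that(1) that(3)[symmetric] cycle_chain_singleton] that(2) \<open>last Gs \<in> T\<close>
      \<open>x \<in> set (last Gs)\<close> by fastforce
  then show "length Gs = 1 \<or> S \<inter> set (last Gs) \<subseteq> {x}" using \<open>Gs \<noteq> []\<close> by (auto simp: le_Suc_eq)
qed

text \<open>Otherwise take a shortest chain of cycles of T between two distinct vertices y, x of C.
  By minimality it meets C only in y and, within its last cycle Z, in x; it links y with Z by a
  pair of opposite paths avoiding C and Z.\<close>
lemma attached_cycle_meets_once:
  assumes k: "k \<ge> 3" and noB: "\<not> contains_subdiv_B A k 1 1" and nice: "nice A k (insert C T)"
    and "C \<notin> T" and conn: "cycle_chain_connected T"
    and x0: "x0 \<in> set C" "x0 \<in> \<Union>(set ` T)"
  shows "set C \<inter> \<Union>(set ` T) = {x0}"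
proof (rule ccontr)
  assume "set C \<inter> \<Union>(set ` T) \<noteq> {x0}"
  then obtain y0 where y0: "y0 \<in> set C" "y0 \<in> \<Union>(set ` T)" "y0 \<noteq> x0" using x0 by blast
  have niceT: "nice A k T" using nice by (rule nice_subset) blast
  have cycles: "\<forall>Z \<in> T. dcycle A Z" and pairwise: "pairwise_meet_le_1 T"
    using nice_cycle[OF niceT] nice_pairwise_meet_le_1[OF niceT] by blast+
  have C: "dcycle A C" "length C \<ge> 2 * k - 2" using nice_cycle[OF nice] by simp_all
  obtain Zs where "cycle_chain T Zs y0 x0" using conn y0(2) x0(2) unfolding cycle_chain_connected_def by blast
  then obtain x y Gs where xy: "x \<in> set C" "y \<in> set C" "x \<noteq> y"
    and G: "cycle_chain T Gs y x" "induced_cycle_chain Gs y x"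
    and min: "\<And>x' y' Zs'. x' \<in> set C \<Longrightarrow> y' \<in> set C \<Longrightarrow> x' \<noteq> y' \<Longrightarrow> cycle_chain T Zs' y' x' \<Longrightarrow>
      length Gs \<le> length Zs'"
    using shortest_cycle_chain_within[OF x0(1) y0(1) y0(3)[symmetric]] by metis
  define Z where "Z = last Gs"
  have "Gs \<noteq> []" "set Gs \<subseteq> T" "x \<in> set Z" using G(1) by (auto simp: cycle_chain_def Z_def)
  then have ZT: "Z \<in> T" by (auto simp: Z_def)
  have Z: "dcycle A Z" using nice_cycle[OF niceT ZT] by simp
  have meets: "set C \<inter> \<Union>(set ` set (butlast Gs)) \<subseteq> {y}" "length Gs = 1 \<or> set C \<inter> set Z \<subseteq> {x}"
    unfolding Z_def by (rule shortest_cycle_chain_meets[OF G(1) xy(1,2)]; rule min; assumption)+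
  have "length Gs \<noteq> 1"
  proof
    assume "length Gs = 1"
    then have "Gs = [Z]" by (cases Gs) (auto simp: Z_def)
    then have "{x, y} \<subseteq> set C \<inter> set Z" using G(1) xy \<open>x \<in> set Z\<close> by (simp add: cycle_chain_def)
    moreover have "card (set C \<inter> set Z) \<le> 1"
      using nice ZT \<open>C \<notin> T\<close> unfolding nice_def by (metis insertCI)
    ultimately show False using xy(3) card_mono[of "set C \<inter> set Z" "{x, y}"] by simp
  qed
  then have CZ: "set C \<inter> set Z \<subseteq> {x}" using meets(2) by simp
  obtain c Q R where E: "c \<in> set Z" "c \<noteq> x" "dpath A Q" "hd Q = c" "last Q = y"
    "dpath A R" "hd R = y" "last R = c"
    "set Q \<union> set R \<subseteq> insert y (\<Union>(set ` set (butlast Gs)))" "(set Q \<union> set R) \<inter> set Z \<subseteq> {c}"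
    unfolding Z_def by (rule induced_cycle_chain_last_entry[OF G xy(3)[symmetric] cycles pairwise])
  have "y \<notin> set Z" using CZ xy by blast
  moreover have "(set Q \<union> set R) \<inter> set C \<subseteq> {y}" using E(9) meets(1) by blast
  ultimately have "contains_subdiv_B A k 1 1"
    by (intro subdiv_B_of_touching_linked_cycles[OF k C xy Z(1) E(1) \<open>x \<in> set Z\<close> E(2) _ E(3-8) _ E(10) CZ])
  with noB show False ..
qed

text \<open>Follow a shortest chain of cycles of T from x to b: its last cycle Z contains b and is
  linked to x by a pair of opposite paths avoiding C.\<close>
lemma attached_cycle_no_cross_adjacency:
  assumes k: "k \<ge> 3" and noB: "\<not> contains_subdiv_B A k 1 1" and nice: "nice A k (insert C T)"
    and conn: "cycle_chain_connected T" and CT: "set C \<inter> \<Union>(set ` T) = {x}"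
    and a: "a \<in> set C" "a \<noteq> x" and b: "b \<in> \<Union>(set ` T)" "b \<noteq> x"
  shows "\<not> adjacent A a b"
proof
  assume adj: "adjacent A a b"
  have niceT: "nice A k T" using nice by (rule nice_subset) blast
  have cycles: "\<forall>Z \<in> T. dcycle A Z" and pairwise: "pairwise_meet_le_1 T"
    using nice_cycle[OF niceT] nice_pairwise_meet_le_1[OF niceT] by blast+
  have x: "x \<in> set C" "x \<in> \<Union>(set ` T)" using CT by auto
  obtain Zs where "cycle_chain T Zs x b" using conn x(2) b(1) unfolding cycle_chain_connected_def by blast
  then obtain Gs where G: "cycle_chain T Gs x b" "induced_cycle_chain Gs x b"
    by (rule induced_cycle_chain_exists)
  define Z where "Z = last Gs"
  have "Gs \<noteq> []" "set Gs \<subseteq> T" "b \<in> set Z" using G(1) by (auto simp: cycle_chain_def Z_def)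
  then have ZT: "Z \<in> T" by (auto simp: Z_def)
  obtain c Q R where E: "c \<in> set Z" "c \<noteq> b" "dpath A Q" "hd Q = c" "last Q = x"
    "dpath A R" "hd R = x" "last R = c"
    "set Q \<union> set R \<subseteq> insert x (\<Union>(set ` set (butlast Gs)))" "(set Q \<union> set R) \<inter> set Z \<subseteq> {c}"
    unfolding Z_def by (rule induced_cycle_chain_last_entry[OF G b(2)[symmetric] cycles pairwise])
  have "set (butlast Gs) \<subseteq> T" using \<open>set Gs \<subseteq> T\<close> by (meson in_set_butlastD subset_iff)
  then have "set Z \<union> set Q \<union> set R \<subseteq> \<Union>(set ` T)" using E(9) ZT x(2) by blast
  then have C_meet: "set C \<inter> (set Z \<union> set Q \<union> set R) \<subseteq> {x}" using CT by blast
  have "x \<in> set Q" using E(3,5) by (auto simp: dpath_def)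
  then have CZ: "set C \<inter> set Z \<subseteq> {c}" using C_meet E(10) by blast
  have Cc: "dcycle A C" using nice_cycle[OF nice] by simp
  have Zc: "dcycle A Z" "length Z \<ge> 2 * k - 2" using nice_cycle[OF niceT ZT] by simp_all
  have "contains_subdiv_B A k 1 1"
    by (rule subdiv_B_of_cross_adjacency[OF k Cc x(1) a Zc E(1) \<open>b \<in> set Z\<close> E(2)[symmetric] E(3-8)
          C_meet CZ E(10) adj])
  with noB show False ..
qed

text \<open>Permute the colours of the second colouring so that both agree on the common vertex.\<close>
lemma proper_colouring_glue:
  assumes f: "proper_colouring U (induced_arcs A U) m f"
    and g: "proper_colouring W (induced_arcs A W) m g"
    and UW: "U \<inter> W = {x}"
    and no_cross: "\<And>a b. a \<in> W \<Longrightarrow> a \<noteq> x \<Longrightarrow> b \<in> U \<Longrightarrow> b \<noteq> x \<Longrightarrow> \<not> adjacent A a b"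
  obtains h where "proper_colouring (U \<union> W) (induced_arcs A (U \<union> W)) m h"
proof -
  have x: "x \<in> U" "x \<in> W" using UW by auto
  define \<sigma> where "\<sigma> n = (if n = g x then f x else if n = f x then g x else n)" for n
  have \<sigma>_less: "\<sigma> n < m" if "n < m" for n
    using that f g x unfolding proper_colouring_induced_iff \<sigma>_def by auto
  have \<sigma>_inj: "\<sigma> i = \<sigma> j \<Longrightarrow> i = j" for i j by (auto simp: \<sigma>_def split: if_splits)
  define h where "h v = (if v \<in> U then f v else \<sigma> (g v))" for v
  have hU: "h v = f v" if "v \<in> U" for v using that by (simp add: h_def)
  have hW: "h v = \<sigma> (g v)" if "v \<in> W" for v
    using that UW by (cases "v = x") (auto simp: h_def \<sigma>_def)
  have "proper_colouring (U \<union> W) (induced_arcs A (U \<union> W)) m h"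
    unfolding proper_colouring_induced_iff
  proof (intro conjI allI impI ballI)
    fix v assume "v \<in> U \<union> W"
    then show "h v < m" using f g hU hW \<sigma>_less unfolding proper_colouring_induced_iff by auto
  next
    fix a b assume ab: "(a, b) \<in> A" "a \<in> U \<union> W" "b \<in> U \<union> W"
    consider "a \<in> U" "b \<in> U" | "a \<in> W" "b \<in> W"
      using ab no_cross[of a b] no_cross[of b a] x by blast
    then show "h a \<noteq> h b"
    proof cases
      case 1
      then show ?thesis using f ab(1) hU unfolding proper_colouring_induced_iff by auto
    next
      case 2
      then show ?thesis using g ab(1) hW \<sigma>_inj unfolding proper_colouring_induced_iff by metis
    qed
  qed
  then show thesis by (rule that)
qed

lemma cycle_chain_connected_singleton: "cycle_chain_connected {C}"
  by (auto simp: cycle_chain_connected_def intro: cycle_chain_singleton)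

lemma cycle_chain_connected_insert:
  assumes conn: "cycle_chain_connected T" and x: "x \<in> set C" "x \<in> \<Union>(set ` T)"
  shows "cycle_chain_connected (insert C T)"
  unfolding cycle_chain_connected_def
proof (intro ballI)
  fix s t assume s: "s \<in> \<Union>(set ` insert C T)" and t: "t \<in> \<Union>(set ` insert C T)"
  have to_x: "\<exists>Zs. cycle_chain T Zs v x" and from_x: "\<exists>Zs. cycle_chain T Zs x v"
    if "v \<in> \<Union>(set ` T)" for v
    using conn x(2) that unfolding cycle_chain_connected_def by blast+
  consider "s \<in> set C" "t \<in> set C" | "s \<in> set C" "t \<in> \<Union>(set ` T)" | "s \<in> \<Union>(set ` T)" "t \<in> set C"
    | "s \<in> \<Union>(set ` T)" "t \<in> \<Union>(set ` T)"
    using s t by auto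
  then show "\<exists>Zs. cycle_chain (insert C T) Zs s t"
  proof cases
    case 1
    then show ?thesis using cycle_chain_singleton[of C "insert C T"] by blast
  next
    case 2
    then obtain Zs where "cycle_chain T Zs x t" using from_x by blast
    then have "cycle_chain (insert C T) (C # Zs) s t" by (rule cycle_chain_Cons[OF _ x(1) \<open>s \<in> set C\<close>])
    then show ?thesis ..
  next
    case 3
    then obtain Zs where "cycle_chain T Zs s x" using to_x by blast
    then have "cycle_chain (insert C T) (Zs @ [C]) s t" by (rule cycle_chain_snoc[OF _ x(1) \<open>t \<in> set C\<close>])
    then show ?thesis ..
  next
    case 4
    then show ?thesis using conn cycle_chain_mono[of T _ s t "insert C T"]
      unfolding cycle_chain_connected_def by blast
  qed
qed

lemma colourable_insert_attached_cycle:
  assumes k: "k \<ge> 3" and noB: "\<not> contains_subdiv_B A k 1 1" and nice: "nice A k (insert C T)"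
    and "C \<notin> T" and conn: "cycle_chain_connected T" and loopfree: "\<forall>x. (x, x) \<notin> A"
    and x: "x \<in> set C" "x \<in> \<Union>(set ` T)"
    and f: "proper_colouring (\<Union>(set ` T)) (induced_arcs A (\<Union>(set ` T))) (2 * k - 2) f"
  shows "\<exists>h. proper_colouring (\<Union>(set ` insert C T)) (induced_arcs A (\<Union>(set ` insert C T))) (2 * k - 2) h"
proof -
  have CT: "set C \<inter> \<Union>(set ` T) = {x}"
    by (rule attached_cycle_meets_once[OF k noB nice \<open>C \<notin> T\<close> conn x])
  obtain g where g: "proper_colouring (set C) (induced_arcs A (set C)) (2 * k - 2) g"
    using dcycle_colourable[OF _ noB k _ loopfree] nice_cycle[OF nice] by blast
  obtain h where "proper_colouring (\<Union>(set ` T) \<union> set C) (induced_arcs A (\<Union>(set ` T) \<union> set C)) (2 * k - 2) h"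
  proof (rule proper_colouring_glue[OF f g])
    show "\<Union>(set ` T) \<inter> set C = {x}" using CT by blast
    show "\<not> adjacent A a b" if "a \<in> set C" "a \<noteq> x" "b \<in> \<Union>(set ` T)" "b \<noteq> x" for a b
      by (rule attached_cycle_no_cross_adjacency[OF k noB nice conn CT that])
  qed
  then show ?thesis by (intro exI[of _ h]) (simp add: Un_commute)
qed

lemma rtrancl_leaves_set:
  assumes "(a, b) \<in> r\<^sup>*" "a \<in> P" "b \<notin> P"
  obtains x y where "(a, x) \<in> r\<^sup>*" "(x, y) \<in> r" "x \<in> P" "y \<notin> P"
  using assms
proof (induction rule: rtrancl_induct)
  case (step y z)
  then show ?case by (cases "y \<in> P") (auto intro: rtrancl_into_rtrancl)
qed simp

lemma component_grows:
  assumes S: "S = {C \<in> Cs. (c0, C) \<in> (share_rel Cs)\<^sup>*}" and T: "c0 \<in> T" "T \<subseteq> S" "T \<noteq> S"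
  obtains C x where "C \<in> S" "C \<notin> T" "x \<in> set C" "x \<in> \<Union>(set ` T)"
proof -
  obtain d where "d \<in> S" "d \<notin> T" using T by blast
  then obtain c1 C where c1C: "(c0, c1) \<in> (share_rel Cs)\<^sup>*" "(c1, C) \<in> share_rel Cs" "c1 \<in> T" "C \<notin> T"
    using rtrancl_leaves_set[of c0 d "share_rel Cs" T] T(1) S by blast
  then have "C \<in> S" using S by (auto simp: share_rel_def intro: rtrancl_into_rtrancl)
  moreover obtain x where "x \<in> set C" "x \<in> set c1" using c1C(2) by (auto simp: share_rel_def)
  ultimately show thesis using c1C(3,4) by (intro that[of C x]) auto
qed

text \<open>Build up the component one cycle at a time, keeping the part built so far connected by
  chains of cycles, so that each new cycle is attached to it.\<close>
lemma component_colourable: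
  assumes k: "k \<ge> 3" and noB: "\<not> contains_subdiv_B A k 1 1" and nice: "nice A k Cs"
    and loopfree: "\<forall>x. (x, x) \<notin> A" and c0: "c0 \<in> Cs"
    and S: "S = {C \<in> Cs. (c0, C) \<in> (share_rel Cs)\<^sup>*}" and fin: "finite S"
  shows "\<exists>f. proper_colouring (\<Union>(set ` S)) (induced_arcs A (\<Union>(set ` S))) (2 * k - 2) f"
proof -
  have c0S: "c0 \<in> S" using S c0 by simp
  have "\<exists>T \<subseteq> S. c0 \<in> T \<and> card T = Suc n \<and> cycle_chain_connected T \<and>
      (\<exists>f. proper_colouring (\<Union>(set ` T)) (induced_arcs A (\<Union>(set ` T))) (2 * k - 2) f)"
    if "Suc n \<le> card S" for n
    using that
  proof (induction n)
    case 0
    have "\<exists>f. proper_colouring (set c0) (induced_arcs A (set c0)) (2 * k - 2) f"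
      using dcycle_colourable[OF _ noB k _ loopfree] nice_cycle[OF nice c0] by blast
    then show ?case using c0S cycle_chain_connected_singleton by (intro exI[of _ "{c0}"]) auto
  next
    case (Suc n)
    then obtain T f where T: "T \<subseteq> S" "c0 \<in> T" "card T = Suc n" "cycle_chain_connected T"
      and f: "proper_colouring (\<Union>(set ` T)) (induced_arcs A (\<Union>(set ` T))) (2 * k - 2) f"
      by auto
    have "T \<noteq> S" using T(3) Suc.prems by auto
    then obtain C x where C: "C \<in> S" "C \<notin> T" and x: "x \<in> set C" "x \<in> \<Union>(set ` T)"
      using component_grows[OF S T(2,1)] by blast
    have niceCT: "nice A k (insert C T)" using nice T(1) C(1) S by (auto intro: nice_subset)
    have "finite T" using T(1) fin by (rule finite_subset)
    then show ?case
      using T C cycle_chain_connected_insert[OF T(4) x]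
        colourable_insert_attached_cycle[OF k noB niceCT C(2) T(4) loopfree x f]
      by (intro exI[of _ "insert C T"]) auto
  qed
  from this[of "card S - 1"] obtain T where "T \<subseteq> S" "card T = card S"
    and "\<exists>f. proper_colouring (\<Union>(set ` T)) (induced_arcs A (\<Union>(set ` T))) (2 * k - 2) f"
    using c0S fin by (metis Suc_diff_1 card_gt_0_iff empty_iff le_refl)
  moreover from this have "T = S" using fin by (simp add: card_subset_eq)
  ultimately show ?thesis by simp
qed

theorem mainTheorem10:
  fixes V :: "'a set" and A :: "('a \<times> 'a) set" and k :: nat
    and \<C> \<S> :: "'a list set"
  assumes "k \<ge> 3"
    and "digraph V A"
    and "\<not> contains_subdiv_B A k 1 1"
    and "nice A k \<C>"
    and "is_component \<C> \<S>"
  shows "chromatic_number (\<Union>c \<in> \<S>. set c) (induced_arcs A (\<Union>c \<in> \<S>. set c)) \<le> 2 * k - 2"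
proof -
  obtain c0 where c0: "c0 \<in> \<C>" and S: "\<S> = {C \<in> \<C>. (c0, C) \<in> (share_rel \<C>)\<^sup>*}"
    using assms(5) by (auto simp: is_component_def)
  have loopfree: "\<forall>x. (x, x) \<notin> A" using assms(2) by (simp add: digraph_def)
  have "\<S> \<subseteq> {C. dcycle A C}" using S assms(4) by (auto simp: nice_def)
  then have "finite \<S>" using finite_dcycles assms(2) by (metis digraph_def finite_subset)
  then obtain f where "proper_colouring (\<Union>c \<in> \<S>. set c) (induced_arcs A (\<Union>c \<in> \<S>. set c)) (2 * k - 2) f"
    using component_colourable[OF assms(1,3,4) loopfree c0 S] by blast
  then show ?thesis unfolding chromatic_number_def by (blast intro: Least_le)
qed

end
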